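(* Let $U=\begin{pmatrix} a & b\\ c & d\end{pmatrix}$ be a $2\times 2$ unitary matrix with $abcd\neq 0$. Let $\Phi=\{{}^t[\alpha,\beta]\in\mathbf{C}^2:|\alpha|^2+|\beta|^2=1\}$ and define $$\Phi_s=\{\varphi\in\Phi: P(X_n^{\varphi}=k)=P(X_n^{\varphi}=-k)\text{ for all } n\in\mathbf{Z}_+,\ k\in\mathbf{Z}\},$$ $$\Phi_0=\{\varphi\in\Phi: E(X_n^{\varphi})=0\text{ for all } n\in\mathbf{Z}_+\},$$ $$\Phi_{\perp}=\{\varphi={}^t[\alpha,\beta]\in\Phi: |\alpha|=|\beta|,\ a\alpha\overline{b\beta}+\overline{a\alpha}b\beta=0\}.$$ Then $\Phi_s=\Phi_0=\Phi_{\perp}$.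
   Context: $\mathbf{Z}_+$ denotes the non-negative integers. Quantum random walk on $\mathbf{Z}$ determined by $U$: set $P=\begin{pmatrix} a & b\\ 0&0\end{pmatrix}$, $Q=\begin{pmatrix} 0&0\\ c & d\end{pmatrix}$. For $\varphi\in\Phi$, define amplitudes $\Psi_k(n)\in\mathbf{C}^2$ by $\Psi_0(0)=\varphi$, $\Psi_k(0)=0$ for $k\neq0$, and $\Psi_k(n+1)=P\Psi_{k+1}(n)+Q\Psi_{k-1}(n)$; $X_n^{\varphi}$ takes value $k$ with probability $P(X_n^{\varphi}=k)=\|\Psi_k(n)\|^2$. $\overline{z}$ denotes complex conjugate. *)

theory Defs
  imports Complex_Main
begin

definition unitary2 :: "complex \<Rightarrow> complex \<Rightarrow> complex \<Rightarrow> complex \<Rightarrow> bool" where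
  "unitary2 a b c d \<longleftrightarrow>
     a * cnj a + b * cnj b = 1 \<and> a * cnj c + b * cnj d = 0 \<and>
     c * cnj a + d * cnj b = 0 \<and> c * cnj c + d * cnj d = 1"

definition Pmat :: "complex \<Rightarrow> complex \<Rightarrow> complex \<times> complex \<Rightarrow> complex \<times> complex" where
  "Pmat a b v = (a * fst v + b * snd v, 0)"

definition Qmat :: "complex \<Rightarrow> complex \<Rightarrow> complex \<times> complex \<Rightarrow> complex \<times> complex" where
  "Qmat c d v = (0, c * fst v + d * snd v)"

fun qw_amp :: "complex \<Rightarrow> complex \<Rightarrow> complex \<Rightarrow> complex \<Rightarrow> complex \<times> complex \<Rightarrow> nat \<Rightarrow> int \<Rightarrow> complex \<times> complex" where
  "qw_amp a b c d phi 0 k = (if k = 0 then phi else (0, 0))"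
| "qw_amp a b c d phi (Suc n) k =
     (let u = Pmat a b (qw_amp a b c d phi n (k + 1));
          v = Qmat c d (qw_amp a b c d phi n (k - 1))
      in (fst u + fst v, snd u + snd v))"

definition qw_prob :: "complex \<Rightarrow> complex \<Rightarrow> complex \<Rightarrow> complex \<Rightarrow> complex \<times> complex \<Rightarrow> nat \<Rightarrow> int \<Rightarrow> real" where
  "qw_prob a b c d phi n k =
     (cmod (fst (qw_amp a b c d phi n k)))\<^sup>2 + (cmod (snd (qw_amp a b c d phi n k)))\<^sup>2"

text \<open>E(X_n^phi) = sum_k k P(X_n^phi = k); X_n^phi is supported in [-n, n].\<close>
definition qw_mean :: "complex \<Rightarrow> complex \<Rightarrow> complex \<Rightarrow> complex \<Rightarrow> complex \<times> complex \<Rightarrow> nat \<Rightarrow> real" where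
  "qw_mean a b c d phi n = (\<Sum>k\<in>{- int n .. int n}. real_of_int k * qw_prob a b c d phi n k)"

definition Phi :: "(complex \<times> complex) set" where
  "Phi = {phi. (cmod (fst phi))\<^sup>2 + (cmod (snd phi))\<^sup>2 = 1}"

definition Phi_s :: "complex \<Rightarrow> complex \<Rightarrow> complex \<Rightarrow> complex \<Rightarrow> (complex \<times> complex) set" where
  "Phi_s a b c d = {phi \<in> Phi. \<forall>n k. qw_prob a b c d phi n k = qw_prob a b c d phi n (- k)}"

definition Phi_0 :: "complex \<Rightarrow> complex \<Rightarrow> complex \<Rightarrow> complex \<Rightarrow> (complex \<times> complex) set" where
  "Phi_0 a b c d = {phi \<in> Phi. \<forall>n. qw_mean a b c d phi n = 0}"

definition Phi_perp :: "complex \<Rightarrow> complex \<Rightarrow> complex \<Rightarrow> complex \<Rightarrow> (complex \<times> complex) set" where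
  "Phi_perp a b c d = {phi \<in> Phi. let \<alpha> = fst phi; \<beta> = snd phi in
      cmod \<alpha> = cmod \<beta> \<and> a * \<alpha> * cnj (b * \<beta>) + cnj (a * \<alpha>) * b * \<beta> = 0}"

end

theory Submission
  imports Defs
begin

(*
  A symmetric distribution has mean zero, so the work is in the other two inclusions.
  Write u = a \<alpha> + b \<beta> and v = c \<alpha> + d \<beta> for the amplitudes of the first step.  Then
  E X_1 = |v|^2 - |u|^2, and once |u| = |v| unitarity (|d| = |a|, |c| = |b|, a cnj c + b cnj d = 0)
  collapses E X_3 to -4 |b|^2 Re (a cnj c v cnj u).  Pulling the two conditions |u| = |v| and
  Re (a cnj c v cnj u) = 0 back through U gives exactly |\<alpha>| = |\<beta>| and Re (a \<alpha> cnj (b \<beta>)) = 0.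
  Conversely these two conditions force \<alpha>^2 a c = \<beta>^2 b d, which makes \<phi> a multiple of its
  image under the swap (\<alpha>, \<beta>) \<mapsto> (\<beta>, r \<alpha>), r = a c / (b d); that swap intertwines P and Q, so
  the reflection k \<mapsto> -k maps the amplitudes to unimodular multiples of themselves.
*)

lemma unitary2_relations:
  assumes "unitary2 a b c d"
  shows "d * cnj d = a * cnj a" "c * cnj c = b * cnj b"
    "cnj a * c + cnj b * d = 0" "cnj a * b + cnj c * d = 0"
proof -
  have U: "a * cnj a + b * cnj b = 1" "a * cnj c + b * cnj d = 0" "c * cnj c + d * cnj d = 1"
    using assms unfolding unitary2_def by auto
  show row_orth: "cnj a * c + cnj b * d = 0"
    using arg_cong[OF U(2), of cnj] by simp
  show "d * cnj d = a * cnj a" using U row_orth by algebra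
  show "c * cnj c = b * cnj b" using U row_orth by algebra
  show "cnj a * b + cnj c * d = 0" using U row_orth by algebra
qed

lemma cmod_eq_iff_mult_cnj: "cmod z = cmod w \<longleftrightarrow> z * cnj z = w * cnj w"
  by (metis complex_norm_square norm_ge_zero of_real_eq_iff power2_eq_iff_nonneg)

lemma Re_eq_0_iff_add_cnj: "Re z = 0 \<longleftrightarrow> z + cnj z = 0"
  by (simp add: complex_add_cnj)

(* With S v = (snd v, r * fst v) the hypotheses say P S = l S Q and l Q S = S P. *)
lemma qw_amp_reflect:
  fixes a b c d l r w :: complex
  assumes ld: "l * d = a" and br: "b * r = l * c" and l: "l \<noteq> 0"
    and phi: "phi = (w * snd phi, w * r * fst phi)"
  shows "qw_amp a b c d phi n (- k) =
    (w * l powi k * snd (qw_amp a b c d phi n k),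
     w * l powi k * r * fst (qw_amp a b c d phi n k))"
proof (induction n arbitrary: k)
  case 0
  then show ?case using phi by (cases "k = 0") auto
next
  case (Suc n)
  have P_swap: "a * y + b * (r * x) = l * (c * x + d * y)" for x y
  proof -
    have "a * y + b * (r * x) = (l * d) * y + (l * c) * x" by (simp add: ld br)
    then show ?thesis by (simp add: algebra_simps)
  qed
  have Q_swap: "l * (c * y + d * (r * x)) = r * (a * x + b * y)" for x y
  proof -
    have "l * (c * y + d * (r * x)) = (l * c) * y + (l * d) * (r * x)"
      by (simp add: algebra_simps)
    then show ?thesis by (simp add: ld flip: br) (simp add: algebra_simps)
  qed
  have l_pow: "l powi (k - 1) * l = l powi k" "l powi (k + 1) = l powi k * l"
    using l by (simp_all add: power_int_diff power_int_add_1)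
  obtain x y where A: "qw_amp a b c d phi n (k - 1) = (x, y)" by fastforce
  obtain x' y' where B: "qw_amp a b c d phi n (k + 1) = (x', y')" by fastforce
  have "qw_amp a b c d phi n (- k + 1) = (w * l powi (k - 1) * y, w * l powi (k - 1) * r * x)"
    using Suc.IH[of "k - 1"] A by simp
  moreover have
    "qw_amp a b c d phi n (- k - 1) = (w * l powi (k + 1) * y', w * l powi (k + 1) * r * x')"
    using Suc.IH[of "k + 1"] B by simp
  moreover have "a * (w * l powi (k - 1) * y) + b * (w * l powi (k - 1) * r * x)
      = w * l powi k * (c * x + d * y)"
  proof -
    have "a * (w * l powi (k - 1) * y) + b * (w * l powi (k - 1) * r * x)
        = w * l powi (k - 1) * (a * y + b * (r * x))" by (simp add: algebra_simps)
    also have "\<dots> = w * (l powi (k - 1) * l) * (c * x + d * y)" by (simp add: P_swap)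
    finally show ?thesis by (simp add: l_pow)
  qed
  moreover have "c * (w * l powi (k + 1) * y') + d * (w * l powi (k + 1) * r * x')
      = w * l powi k * r * (a * x' + b * y')"
  proof -
    have "c * (w * l powi (k + 1) * y') + d * (w * l powi (k + 1) * r * x')
        = w * l powi k * (l * (c * y' + d * (r * x')))"
      unfolding l_pow(2) by (simp add: algebra_simps)
    then show ?thesis by (simp add: Q_swap)
  qed
  ultimately show ?case
    by (simp add: Let_def Pmat_def Qmat_def A B)
qed

lemma qw_prob_reflect:
  fixes a b c d l r w :: complex
  assumes "l * d = a" and "b * r = l * c" and "phi = (w * snd phi, w * r * fst phi)"
    and l: "cmod l = 1" and r: "cmod r = 1" and w: "cmod w = 1"
  shows "qw_prob a b c d phi n (- k) = qw_prob a b c d phi n k"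
proof -
  have "l \<noteq> 0" using l by auto
  then show ?thesis
    unfolding qw_prob_def qw_amp_reflect[OF assms(1,2) \<open>l \<noteq> 0\<close> assms(3)]
    by (simp add: norm_mult norm_power_int l r w)
qed

lemma Phi_perp_subset_Phi_s:
  assumes U: "unitary2 a b c d" and nz: "a * b * c * d \<noteq> 0"
  shows "Phi_perp a b c d \<subseteq> Phi_s a b c d"
proof
  fix phi assume perp: "phi \<in> Phi_perp a b c d"
  obtain x y where phi: "phi = (x, y)" by fastforce
  have "phi \<in> Phi" and xy: "cmod x = cmod y"
    and re: "a * x * (cnj b * cnj y) + cnj a * cnj x * (b * y) = 0"
    using perp unfolding Phi_perp_def phi by (simp_all add: Let_def ac_simps)
  have "x \<noteq> 0" "y \<noteq> 0" using \<open>phi \<in> Phi\<close> xy unfolding Phi_def phi by auto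
  note rel = unitary2_relations[OF U]
  have xy': "x * cnj x = y * cnj y" using xy cmod_eq_iff_mult_cnj by blast
  (* algebra is sensitive to the order of the facts here: other orders do not terminate *)
  have "x * cnj x * cnj a * (x * x * a * c - y * y * b * d) = 0"
    using rel(3) re xy' by algebra
  then have phase: "x * x * a * c = y * y * b * d" using nz \<open>x \<noteq> 0\<close> by simp
  have "cmod d = cmod a" "cmod c = cmod b" using rel cmod_eq_iff_mult_cnj by blast+
  define r where "r = a * c / (b * d)"
  have "qw_prob a b c d phi n (- k) = qw_prob a b c d phi n k" for n k
  proof (rule qw_prob_reflect[where l = "a / d" and r = r and w = "x / y"])
    show "a / d * d = a" "b * r = a / d * c" using nz unfolding r_def by auto
    show "phi = (x / y * snd phi, x / y * r * fst phi)"
      using phase nz \<open>x \<noteq> 0\<close> \<open>y \<noteq> 0\<close> unfolding phi r_def by (simp add: field_simps)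
    show "cmod (a / d) = 1" "cmod r = 1" "cmod (x / y) = 1"
      using nz \<open>y \<noteq> 0\<close> xy \<open>cmod d = cmod a\<close> \<open>cmod c = cmod b\<close>
      unfolding r_def by (simp_all add: norm_divide norm_mult)
  qed
  then show "phi \<in> Phi_s a b c d" using \<open>phi \<in> Phi\<close> unfolding Phi_s_def by auto
qed

lemma qw_mean_eq_0_if_symmetric:
  assumes "\<And>k. qw_prob a b c d phi n (- k) = qw_prob a b c d phi n k"
  shows "qw_mean a b c d phi n = 0"
proof -
  let ?f = "\<lambda>k. real_of_int k * qw_prob a b c d phi n k"
  have "qw_mean a b c d phi n = (\<Sum>k\<in>{- int n .. int n}. ?f (- k))"
    unfolding qw_mean_def by (rule sum.reindex_bij_witness[of _ uminus uminus]) auto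
  also have "\<dots> = - qw_mean a b c d phi n"
    unfolding qw_mean_def assms by (simp add: sum_negf)
  finally show ?thesis by simp
qed

lemma qw_mean_1:
  "qw_mean a b c d (x, y) 1 = (cmod (c * x + d * y))\<^sup>2 - (cmod (a * x + b * y))\<^sup>2"
proof -
  have "{- int 1 .. int 1} = {-1, 0, 1}" by auto
  then show ?thesis unfolding qw_mean_def qw_prob_def by (simp add: Pmat_def Qmat_def)
qed

(* \<Psi>_3(3) = (0, d d v), \<Psi>_1(3) = (b d v, c b v + d c u), \<Psi>_-1(3) = (a b v + b c u, c a u),
   \<Psi>_-3(3) = (a a u, 0). *)
lemma qw_mean_3:
  assumes "u = a * x + b * y" and "v = c * x + d * y"
  shows "qw_mean a b c d (x, y) 3 =
    3 * (cmod (d * d * v))\<^sup>2 + (cmod (b * d * v))\<^sup>2 + (cmod (c * b * v + d * c * u))\<^sup>2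
    - (cmod (a * b * v + b * c * u))\<^sup>2 - (cmod (c * a * u))\<^sup>2 - 3 * (cmod (a * a * u))\<^sup>2"
proof -
  have "{- int 3 .. int 3} = {-3, -2, -1, 0, 1, 2, 3}" by auto
  then show ?thesis unfolding qw_mean_def qw_prob_def assms
    by (simp add: Pmat_def Qmat_def numeral_eq_Suc power2_eq_square algebra_simps)
qed

lemma qw_mean_3_balanced:
  assumes U: "unitary2 a b c d" and u: "u = a * x + b * y" and v: "v = c * x + d * y"
    and uv: "cmod u = cmod v"
  shows "qw_mean a b c d (x, y) 3 = - 4 * (cmod b)\<^sup>2 * Re (a * cnj c * v * cnj u)"
proof -
  have re_as_cnj: "complex_of_real (Re z) = (z + cnj z) / 2" for z
    by (simp add: complex_add_cnj)
  note rel = unitary2_relations[OF U]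
  have uv': "u * cnj u = v * cnj v" using uv cmod_eq_iff_mult_cnj by blast
  have "complex_of_real (qw_mean a b c d (x, y) 3) =
      complex_of_real (- 4 * (cmod b)\<^sup>2 * Re (a * cnj c * v * cnj u))"
    unfolding qw_mean_3[OF u v] of_real_diff of_real_add of_real_mult of_real_numeral of_real_minus
      complex_norm_square re_as_cnj complex_cnj_mult complex_cnj_add complex_cnj_cnj
    using rel uv' U unfolding unitary2_def by algebra
  then show ?thesis by (simp only: of_real_eq_iff)
qed

lemma unitary2_balanced_preimage:
  assumes U: "unitary2 a b c d" and u: "u = a * x + b * y" and v: "v = c * x + d * y"
    and uv: "cmod u = cmod v" and re: "Re (a * cnj c * v * cnj u) = 0"
  shows "cmod x = cmod y" and "Re (a * x * cnj (b * y)) = 0"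
proof -
  note rel = unitary2_relations[OF U] U[unfolded unitary2_def]
  have uv': "u * cnj u = v * cnj v" using uv cmod_eq_iff_mult_cnj by blast
  have cnj_uv: "cnj u = cnj a * cnj x + cnj b * cnj y" "cnj v = cnj c * cnj x + cnj d * cnj y"
    using u v by simp_all
  have re': "a * cnj c * v * cnj u + cnj a * c * cnj v * u = 0"
    using re unfolding Re_eq_0_iff_add_cnj by simp
  have "x * cnj x = y * cnj y"
    using rel u v uv' cnj_uv re' by algebra
  then show "cmod x = cmod y" using cmod_eq_iff_mult_cnj by blast
  have "a * x * (cnj b * cnj y) + cnj a * cnj x * (b * y) = 0"
    using rel u v uv' cnj_uv re' by algebra
  then show "Re (a * x * cnj (b * y)) = 0"
    unfolding Re_eq_0_iff_add_cnj by (simp add: ac_simps)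
qed

lemma Phi_0_subset_Phi_perp:
  assumes U: "unitary2 a b c d" and nz: "a * b * c * d \<noteq> 0"
  shows "Phi_0 a b c d \<subseteq> Phi_perp a b c d"
proof
  fix phi assume "phi \<in> Phi_0 a b c d"
  then have "phi \<in> Phi" and mean: "\<And>n. qw_mean a b c d phi n = 0"
    unfolding Phi_0_def by auto
  obtain x y where phi: "phi = (x, y)" by fastforce
  define u v where "u = a * x + b * y" and "v = c * x + d * y"
  have uv: "cmod u = cmod v"
    using mean[of 1] unfolding phi qw_mean_1 u_def v_def by (simp add: power2_eq_iff_nonneg)
  have "Re (a * cnj c * v * cnj u) = 0"
    using mean[of 3] nz unfolding phi qw_mean_3_balanced[OF U u_def v_def uv] by simp
  then have "cmod x = cmod y" and "Re (a * x * cnj (b * y)) = 0"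
    using unitary2_balanced_preimage[OF U u_def v_def uv] by blast+
  moreover from this(2) have "a * x * cnj (b * y) + cnj (a * x) * b * y = 0"
    unfolding Re_eq_0_iff_add_cnj by (simp add: mult.assoc)
  ultimately show "phi \<in> Phi_perp a b c d"
    using \<open>phi \<in> Phi\<close> unfolding Phi_perp_def phi by simp
qed

theorem theorem4:
  fixes a b c d :: complex
  assumes "unitary2 a b c d"
    and "a * b * c * d \<noteq> 0"
  shows "Phi_s a b c d = Phi_0 a b c d \<and> Phi_0 a b c d = Phi_perp a b c d"
proof -
  have "Phi_s a b c d \<subseteq> Phi_0 a b c d"
    unfolding Phi_s_def Phi_0_def using qw_mean_eq_0_if_symmetric by fastforce
  then show ?thesis
    using Phi_0_subset_Phi_perp[OF assms] Phi_perp_subset_Phi_s[OF assms] by blast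
qed

end
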